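(* Let $A$ be a simplicial space, $x\in A_n$ a non-degenerate simplex, $N\ge n$, and $(U_\sigma)_{\sigma:[N]\twoheadrightarrow[n]}$ an $x$-admissible family, extended to all epimorphisms $\sigma:[k]\twoheadrightarrow[n]$ with $k\le N$ by $U_\sigma:=\bigcap_{\tau:[N]\twoheadrightarrow[k]}(\tau^* )^{-1}(U_{\sigma\circ\tau})$. For an epimorphism $\sigma:[k]\twoheadrightarrow[n]$ (any $k\in\mathbb{N}$) let $I_\sigma$ be the set of monomorphisms $\delta:[k']\hookrightarrow[k]$ in $\Delta$ with $k'\le N$ and $\sigma\circ\delta$ an epimorphism, and set $U(\sigma):=\bigcap_{\delta\in I_\sigma}(\delta^* )^{-1}(U_{\sigma\circ\delta})\subset A_k$. Then, for every epimorphism $\sigma:[k]\twoheadrightarrow[n]$: (a) $U(\sigma)$ is an open neighborhood of $\sigma^*(x)$ in $A_k$; (b) $U(\sigma)\subset U_\sigma$ whenever $k\le N$; (c) for every monomorphism $\delta:[i]\hookrightarrow[k]$ such that $\sigma\circ\delta$ is onto, $\delta^*(U(\sigma))\subset U(\sigma\circ\delta)$; (d) for every epimorphism $\tau:[k']\twoheadrightarrow[k]$, $\tau^*(U(\sigma))\subset U(\sigma\circ\tau)$; (e) for every epimorphism $\tau:[k]\twoheadrightarrow[k']$, $\tau^*(A_{k'})\cap U(\sigma)\ne\emptyset$ if and only if there exists an epimorphism $\rho:[k']\twoheadrightarrow[n]$ with $\sigma=\rho\circ\tau$.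
   Context: $\Delta$ is the simplicial category with objects $[n]=\{0,\dots,n\}$ and non-decreasing maps as morphisms. A simplicial space is a contravariant functor $A:\Delta\to\mathrm{Top}$, with $A_n:=A([n])$ and $\delta^*:=A(\delta)$. A point of $A_n$ is degenerate if it lies in the image of a degeneracy map $A(\sigma_i^n)$, where $\sigma_i^n:[n]\to[n-1]$ sends $j\le i$ to $j$ and $j>i$ to $j-1$. For $N\ge n$ and non-degenerate $x\in A_n$, a family $(U_\sigma)_{\sigma:[N]\twoheadrightarrow[n]}$ indexed by the epimorphisms $[N]\twoheadrightarrow[n]$ is called $x$-admissible when (i) each $U_\sigma$ is an open neighborhood of $\sigma^*(x)$ in $A_N$, and (ii) for every epimorphism $\sigma:[N]\twoheadrightarrow[n]$ and every epimorphism $\tau:[N]\twoheadrightarrow[m]$, $U_\sigma\cap\tau^*(A_m)\ne\emptyset$ holds if and only if there exists an epimorphism $\rho:[m]\twoheadrightarrow[n]$ with $\sigma=\rho\circ\tau$. *)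

theory Defs
  imports "HOL-Analysis.Analysis" "HOL-Library.FuncSet"
begin

(* Morphisms [m] -> [n] of the simplicial category Delta are represented as
   extensional functions on {0..m} (value undefined outside), non-decreasing,
   with values in {0..n}. *)

definition delta_hom :: "nat \<Rightarrow> nat \<Rightarrow> (nat \<Rightarrow> nat) \<Rightarrow> bool" where
  "delta_hom m n f \<longleftrightarrow> f \<in> {0..m} \<rightarrow>\<^sub>E {0..n} \<and>
     (\<forall>i j. i \<le> j \<longrightarrow> j \<le> m \<longrightarrow> f i \<le> f j)"

definition delta_epi :: "nat \<Rightarrow> nat \<Rightarrow> (nat \<Rightarrow> nat) \<Rightarrow> bool" where
  "delta_epi m n f \<longleftrightarrow> delta_hom m n f \<and> f ` {0..m} = {0..n}"

definition delta_mono :: "nat \<Rightarrow> nat \<Rightarrow> (nat \<Rightarrow> nat) \<Rightarrow> bool" where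
  "delta_mono m n f \<longleftrightarrow> delta_hom m n f \<and> inj_on f {0..m}"

definition delta_id :: "nat \<Rightarrow> (nat \<Rightarrow> nat)" where
  "delta_id n = restrict id {0..n}"

definition delta_comp :: "nat \<Rightarrow> (nat \<Rightarrow> nat) \<Rightarrow> (nat \<Rightarrow> nat) \<Rightarrow> (nat \<Rightarrow> nat)" where
  "delta_comp m g f = compose {0..m} g f"

definition degeneracy :: "nat \<Rightarrow> nat \<Rightarrow> (nat \<Rightarrow> nat)" where
  "degeneracy n i = restrict (\<lambda>j. if j \<le> i then j else j - 1) {0..n}"

(* A simplicial space: spaces X n = A_n (on a common carrier type) and
   act m n f = A(f) : A_n -> A_m for f : [m] -> [n], a contravariant functor. *)
definition simplicial_space ::
  "(nat \<Rightarrow> 'a topology) \<Rightarrow> (nat \<Rightarrow> nat \<Rightarrow> (nat \<Rightarrow> nat) \<Rightarrow> 'a \<Rightarrow> 'a) \<Rightarrow> bool" where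
  "simplicial_space X act \<longleftrightarrow>
     (\<forall>m n f. delta_hom m n f \<longrightarrow> continuous_map (X n) (X m) (act m n f)) \<and>
     (\<forall>n y. y \<in> topspace (X n) \<longrightarrow> act n n (delta_id n) y = y) \<and>
     (\<forall>m k n f g y. delta_hom m k f \<longrightarrow> delta_hom k n g \<longrightarrow> y \<in> topspace (X n) \<longrightarrow>
        act m n (delta_comp m g f) y = act m k f (act k n g y))"

definition degenerate ::
  "(nat \<Rightarrow> 'a topology) \<Rightarrow> (nat \<Rightarrow> nat \<Rightarrow> (nat \<Rightarrow> nat) \<Rightarrow> 'a \<Rightarrow> 'a) \<Rightarrow> nat \<Rightarrow> 'a \<Rightarrow> bool" where
  "degenerate X act n y \<longleftrightarrow>
     (\<exists>i. 1 \<le> n \<and> i \<le> n - 1 \<and> y \<in> act n (n - 1) (degeneracy n i) ` topspace (X (n - 1)))"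

definition admissible ::
  "(nat \<Rightarrow> 'a topology) \<Rightarrow> (nat \<Rightarrow> nat \<Rightarrow> (nat \<Rightarrow> nat) \<Rightarrow> 'a \<Rightarrow> 'a) \<Rightarrow> nat \<Rightarrow> 'a \<Rightarrow> nat
     \<Rightarrow> ((nat \<Rightarrow> nat) \<Rightarrow> 'a set) \<Rightarrow> bool" where
  "admissible X act n x N U \<longleftrightarrow>
     (\<forall>\<sigma>. delta_epi N n \<sigma> \<longrightarrow> openin (X N) (U \<sigma>) \<and> act N n \<sigma> x \<in> U \<sigma>) \<and>
     (\<forall>\<sigma> m \<tau>. delta_epi N n \<sigma> \<longrightarrow> delta_epi N m \<tau> \<longrightarrow>
        (U \<sigma> \<inter> act N m \<tau> ` topspace (X m) \<noteq> {} \<longleftrightarrow>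
         (\<exists>\<rho>. delta_epi m n \<rho> \<and> \<sigma> = delta_comp N \<rho> \<tau>)))"

definition U_ext ::
  "(nat \<Rightarrow> 'a topology) \<Rightarrow> (nat \<Rightarrow> nat \<Rightarrow> (nat \<Rightarrow> nat) \<Rightarrow> 'a \<Rightarrow> 'a) \<Rightarrow> nat
     \<Rightarrow> ((nat \<Rightarrow> nat) \<Rightarrow> 'a set) \<Rightarrow> nat \<Rightarrow> (nat \<Rightarrow> nat) \<Rightarrow> 'a set" where
  "U_ext X act N U k \<sigma> =
     {y \<in> topspace (X k). \<forall>\<tau>. delta_epi N k \<tau> \<longrightarrow> act N k \<tau> y \<in> U (delta_comp N \<sigma> \<tau>)}"

definition U_big ::
  "(nat \<Rightarrow> 'a topology) \<Rightarrow> (nat \<Rightarrow> nat \<Rightarrow> (nat \<Rightarrow> nat) \<Rightarrow> 'a \<Rightarrow> 'a) \<Rightarrow> nat \<Rightarrow> nat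
     \<Rightarrow> ((nat \<Rightarrow> nat) \<Rightarrow> 'a set) \<Rightarrow> nat \<Rightarrow> (nat \<Rightarrow> nat) \<Rightarrow> 'a set" where
  "U_big X act n N U k \<sigma> =
     {y \<in> topspace (X k). \<forall>k' \<delta>. k' \<le> N \<longrightarrow> delta_mono k' k \<delta> \<longrightarrow>
        delta_epi k' n (delta_comp k' \<sigma> \<delta>) \<longrightarrow>
        act k' k \<delta> y \<in> U_ext X act N U k' (delta_comp k' \<sigma> \<delta>)}"

end

theory Submission
  imports Defs
begin

(* U(sigma) is a finite intersection of preimages of the open sets U_rho under the continuous
   maps delta^*, and the family U_rho is stable under pullback along epimorphisms; together with
   the epi-mono factorization in Delta this gives (a)-(d).
   For (e), suppose tau^*(z) lies in U(sigma) but sigma does not factor through tau, i.e.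
   tau a = tau b while sigma a \<noteq> sigma b. A section delta of sigma through a and b sends
   tau^*(z) into U_id, while tau delta identifies sigma a and sigma b, so that point of U_id is
   degenerate. Admissibility, applied to an epimorphism [N] ->> [n], excludes degenerate points
   from U_id. *)

lemma delta_hom_undefined: "delta_hom m k f \<Longrightarrow> \<not> i \<le> m \<Longrightarrow> f i = undefined"
  unfolding delta_hom_def by (auto simp: PiE_def extensional_def)

lemma delta_hom_le: "delta_hom m k f \<Longrightarrow> i \<le> m \<Longrightarrow> f i \<le> k"
  unfolding delta_hom_def by (auto simp: PiE_def Pi_def)

lemma delta_hom_monoD: "delta_hom m k f \<Longrightarrow> i \<le> j \<Longrightarrow> j \<le> m \<Longrightarrow> f i \<le> f j"
  unfolding delta_hom_def by auto

lemma delta_hom_funcset: "delta_hom m k f \<Longrightarrow> f \<in> {0..m} \<rightarrow> {0..k}"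
  unfolding delta_hom_def by (auto simp: PiE_def)

lemma delta_homI:
  "(\<And>i. i \<le> m \<Longrightarrow> f i \<le> k) \<Longrightarrow> (\<And>i. m < i \<Longrightarrow> f i = undefined) \<Longrightarrow>
   (\<And>i j. i \<le> j \<Longrightarrow> j \<le> m \<Longrightarrow> f i \<le> f j) \<Longrightarrow> delta_hom m k f"
  unfolding delta_hom_def by (auto simp: PiE_def Pi_def extensional_def)

lemma delta_epi_imp_hom: "delta_epi m n f \<Longrightarrow> delta_hom m n f"
  by (simp add: delta_epi_def)

lemma delta_mono_imp_hom: "delta_mono m n f \<Longrightarrow> delta_hom m n f"
  by (simp add: delta_mono_def)

lemma delta_epi_surj: "delta_epi m n f \<Longrightarrow> j \<le> n \<Longrightarrow> \<exists>i\<le>m. f i = j"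
  unfolding delta_epi_def by (metis atLeastAtMost_iff imageE le0)

lemma delta_epiI: "delta_hom m n f \<Longrightarrow> (\<And>j. j \<le> n \<Longrightarrow> \<exists>i\<le>m. f i = j) \<Longrightarrow> delta_epi m n f"
  unfolding delta_epi_def using delta_hom_le by fastforce

lemma delta_comp_apply: "i \<le> m \<Longrightarrow> delta_comp m g f i = g (f i)"
  by (simp add: delta_comp_def compose_def)

lemma delta_comp_eqI:
  assumes "delta_hom m n f" "\<And>i. i \<le> m \<Longrightarrow> f i = g (h i)"
  shows "f = delta_comp m g h"
proof
  fix i show "f i = delta_comp m g h i"
    using assms delta_hom_undefined[OF assms(1)]
    by (cases "i \<le> m") (auto simp: delta_comp_def compose_def)
qed

lemma delta_hom_comp: "delta_hom m k f \<Longrightarrow> delta_hom k n g \<Longrightarrow> delta_hom m n (delta_comp m g f)"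
  by (rule delta_homI) (auto simp: delta_comp_def compose_def delta_hom_le delta_hom_monoD)

lemma delta_epi_comp: "delta_epi m k f \<Longrightarrow> delta_epi k n g \<Longrightarrow> delta_epi m n (delta_comp m g f)"
  by (rule delta_epiI) (use delta_hom_comp delta_epi_imp_hom delta_epi_surj delta_comp_apply
      in \<open>blast, metis\<close>)

lemma delta_epi_of_comp_epi:
  assumes f: "delta_hom m k f" and g: "delta_hom k n g" and gf: "delta_epi m n (delta_comp m g f)"
  shows "delta_epi k n g"
proof (rule delta_epiI[OF g])
  fix j assume "j \<le> n"
  then obtain i where "i \<le> m" "g (f i) = j"
    using delta_epi_surj[OF gf] delta_comp_apply by metis
  then show "\<exists>i\<le>k. g i = j" using delta_hom_le[OF f] by blast
qed

lemma delta_comp_assoc: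
  "delta_hom m k f \<Longrightarrow> delta_comp m h (delta_comp m g f) = delta_comp m (delta_comp k h g) f"
  unfolding delta_comp_def using compose_assoc delta_hom_funcset by metis

lemma delta_comp_id_right: "delta_hom m n f \<Longrightarrow> delta_comp m f (delta_id m) = f"
  by (rule ext) (auto simp: delta_comp_def delta_id_def compose_def delta_hom_undefined)

lemma delta_comp_id_left: "delta_hom m n f \<Longrightarrow> delta_comp m (delta_id n) f = f"
  by (rule ext) (auto simp: delta_comp_def delta_id_def compose_def delta_hom_undefined delta_hom_le)

lemma delta_mono_id: "delta_mono n n (delta_id n)"
  unfolding delta_mono_def delta_id_def delta_hom_def by auto

lemma delta_epi_id: "delta_epi n n (delta_id n)"
  by (rule delta_epiI[OF delta_mono_imp_hom[OF delta_mono_id]]) (auto simp: delta_id_def)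

lemma delta_epi_le: "delta_epi m n f \<Longrightarrow> n \<le> m"
  unfolding delta_epi_def
  by (metis card_atLeastAtMost card_image_le finite_atLeastAtMost diff_zero Suc_le_mono)

lemma delta_epi_self_inj: "delta_epi n n f \<Longrightarrow> inj_on f {0..n}"
  unfolding delta_epi_def by (simp add: eq_card_imp_inj_on)

lemma delta_epi_exists: "n \<le> N \<Longrightarrow> \<exists>\<tau>. delta_epi N n \<tau>"
proof
  assume "n \<le> N"
  show "delta_epi N n (restrict (\<lambda>i. min i n) {0..N})"
  proof (rule delta_epiI[OF delta_homI])
    fix j assume "j \<le> n"
    then show "\<exists>i\<le>N. restrict (\<lambda>i. min i n) {0..N} i = j"
      using \<open>n \<le> N\<close> by (intro exI[of _ j]) auto
  qed auto
qed

lemma finite_delta_homs: "finite {f. delta_hom m k f}"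
proof (rule finite_subset)
  show "{f. delta_hom m k f} \<subseteq> PiE {0..m} (\<lambda>_. {0..k})" unfolding delta_hom_def by auto
qed (simp add: finite_PiE)

lemma delta_mono_le_iff:
  assumes "delta_mono m k d" "i \<le> m" "j \<le> m"
  shows "d i \<le> d j \<longleftrightarrow> i \<le> j"
  using assms unfolding delta_mono_def
  by (metis atLeastAtMost_iff delta_hom_monoD inj_on_eq_iff le0 le_antisym nat_le_linear)

lemma delta_mono_with_image:
  assumes "finite S" "S \<noteq> {}" "S \<subseteq> {0..k}"
  shows "\<exists>d. delta_mono (card S - 1) k d \<and> d ` {0..card S - 1} = S"
proof -
  define L where "L = sorted_list_of_set S"
  define j where "j = card S - 1"
  have len: "length L = Suc j" "set L = S"
    using assms unfolding L_def j_def by (auto simp: card_gt_0_iff)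
  have less: "L ! a < L ! b" if "a < b" "b \<le> j" for a b
  proof -
    have "sorted_wrt (<) L" unfolding L_def by (rule strict_sorted_list_of_set)
    then show ?thesis using that len(1) by (simp add: sorted_wrt_nth_less)
  qed
  have mem: "L ! i \<in> S" if "i \<le> j" for i
    using that len nth_mem[of i L] by simp
  define d where "d = restrict (\<lambda>i. L ! i) {0..j}"
  have "delta_hom j k d"
  proof (rule delta_homI)
    show "d i \<le> k" if "i \<le> j" for i using mem[OF that] assms(3) that by (auto simp: d_def)
    show "d i \<le> d i'" if "i \<le> i'" "i' \<le> j" for i i'
      using that less[of i i'] by (cases "i = i'") (auto simp: d_def)
  qed (simp add: d_def)
  moreover have "inj_on d {0..j}"
  proof (rule inj_onI)
    fix a b assume "a \<in> {0..j}" "b \<in> {0..j}" "d a = d b"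
    then show "a = b" using less[of a b] less[of b a] by (auto simp: d_def) (meson linorder_neqE_nat)
  qed
  moreover have "d ` {0..j} = S"
  proof
    show "d ` {0..j} \<subseteq> S" using mem by (auto simp: d_def)
    show "S \<subseteq> d ` {0..j}"
    proof
      fix s assume "s \<in> S"
      then obtain i where "i < Suc j" "s = L ! i" using len by (metis in_set_conv_nth)
      then show "s \<in> d ` {0..j}" by (force simp: d_def)
    qed
  qed
  ultimately show ?thesis unfolding j_def delta_mono_def by blast
qed

lemma delta_epi_mono_factorization:
  assumes g: "delta_hom m k g"
  shows "\<exists>j e d. delta_epi m j e \<and> delta_mono j k d \<and> g = delta_comp m d e"
proof -
  define S where "S = g ` {0..m}"
  define j where "j = card S - 1"
  have S: "finite S" "S \<noteq> {}" "S \<subseteq> {0..k}"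
    unfolding S_def by (auto intro: delta_hom_le[OF g])
  obtain d where d: "delta_mono j k d" and dS: "d ` {0..j} = S"
    using delta_mono_with_image[OF S] unfolding j_def by blast
  have inj: "inj_on d {0..j}" using d unfolding delta_mono_def by blast
  define e where "e = restrict (\<lambda>a. inv_into {0..j} d (g a)) {0..m}"
  have e: "e a \<le> j \<and> d (e a) = g a" if "a \<le> m" for a
  proof -
    have "g a \<in> d ` {0..j}" using dS that unfolding S_def by auto
    then show ?thesis
      using that inv_into_into[of "g a" d "{0..j}"] f_inv_into_f[of "g a" d "{0..j}"]
      by (simp add: e_def)
  qed
  have "delta_hom m j e"
  proof (rule delta_homI)
    show "e a \<le> e b" if "a \<le> b" "b \<le> m" for a b
      using e[of a] e[of b] that delta_hom_monoD[OF g that] delta_mono_le_iff[OF d, of "e a" "e b"]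
      by simp
  qed (use e in \<open>auto simp: e_def\<close>)
  moreover have "\<exists>a\<le>m. e a = i" if "i \<le> j" for i
  proof -
    have "d i \<in> S" using dS that by auto
    then obtain a where "a \<le> m" "g a = d i" unfolding S_def by auto
    moreover have "e a = i" using calculation inv_into_f_f[OF inj] that by (simp add: e_def)
    ultimately show ?thesis by blast
  qed
  ultimately have "delta_epi m j e" by (rule delta_epiI)
  moreover have "g = delta_comp m d e" by (rule delta_comp_eqI[OF g]) (simp add: e)
  ultimately show ?thesis using d by blast
qed

lemma delta_mono_if_section:
  assumes "delta_hom k n \<sigma>" and "\<And>i. i \<le> n \<Longrightarrow> \<delta> i \<le> k \<and> \<sigma> (\<delta> i) = i"
    and "\<And>i. n < i \<Longrightarrow> \<delta> i = undefined"
  shows "delta_mono n k \<delta>"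
proof -
  have "\<delta> i \<le> \<delta> j" if "i \<le> j" "j \<le> n" for i j
  proof (rule ccontr)
    assume "\<not> \<delta> i \<le> \<delta> j"
    then have "j \<le> i" using assms(2) that delta_hom_monoD[OF assms(1), of "\<delta> j" "\<delta> i"] by force
    with that \<open>\<not> \<delta> i \<le> \<delta> j\<close> show False by simp
  qed
  then have "delta_hom n k \<delta>" using assms by (intro delta_homI) auto
  moreover have "inj_on \<delta> {0..n}" using assms(2) by (metis atLeastAtMost_iff inj_onI)
  ultimately show ?thesis unfolding delta_mono_def by blast
qed

lemma delta_epi_section_through:
  assumes \<sigma>: "delta_epi k n \<sigma>" and "a \<le> k" "b \<le> k" "\<sigma> a \<noteq> \<sigma> b"
  shows "\<exists>\<delta>. delta_mono n k \<delta> \<and> delta_comp n \<sigma> \<delta> = delta_id n \<and> \<delta> (\<sigma> a) = a \<and> \<delta> (\<sigma> b) = b"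
proof -
  define \<delta> where "\<delta> = restrict (\<lambda>i. if i = \<sigma> a then a else if i = \<sigma> b then b
                                    else (SOME t. t \<le> k \<and> \<sigma> t = i)) {0..n}"
  have ab: "\<sigma> a \<le> n" "\<sigma> b \<le> n" using assms delta_hom_le[OF delta_epi_imp_hom[OF \<sigma>]] by auto
  have sec: "\<delta> i \<le> k \<and> \<sigma> (\<delta> i) = i" if "i \<le> n" for i
    using someI_ex[OF delta_epi_surj[OF \<sigma> that]] that assms unfolding \<delta>_def by auto
  have "delta_mono n k \<delta>"
    by (rule delta_mono_if_section[OF delta_epi_imp_hom[OF \<sigma>] sec]) (auto simp: \<delta>_def)
  moreover have "delta_id n = delta_comp n \<sigma> \<delta>"
    using sec by (intro delta_comp_eqI[OF delta_mono_imp_hom[OF delta_mono_id]]) (simp add: delta_id_def)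
  moreover have "\<delta> (\<sigma> a) = a" "\<delta> (\<sigma> b) = b" using ab assms(4) by (auto simp: \<delta>_def)
  ultimately show ?thesis by metis
qed

lemma delta_epi_factor_through:
  assumes \<sigma>: "delta_epi k n \<sigma>" and \<tau>: "delta_epi k k' \<tau>"
    and fibres: "\<And>a b. a \<le> k \<Longrightarrow> b \<le> k \<Longrightarrow> \<tau> a = \<tau> b \<Longrightarrow> \<sigma> a = \<sigma> b"
  shows "\<exists>\<rho>. delta_epi k' n \<rho> \<and> \<sigma> = delta_comp k \<rho> \<tau>"
proof -
  note \<sigma>h = delta_epi_imp_hom[OF \<sigma>] and \<tau>h = delta_epi_imp_hom[OF \<tau>]
  define \<rho> where "\<rho> = restrict (\<lambda>t. \<sigma> (SOME a. a \<le> k \<and> \<tau> a = t)) {0..k'}"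
  have \<rho>: "\<rho> (\<tau> a) = \<sigma> a" if "a \<le> k" for a
  proof -
    define a' where "a' = (SOME a'. a' \<le> k \<and> \<tau> a' = \<tau> a)"
    have "a' \<le> k \<and> \<tau> a' = \<tau> a" unfolding a'_def
      using someI_ex[of "\<lambda>a'. a' \<le> k \<and> \<tau> a' = \<tau> a"] that by blast
    then have "\<sigma> a' = \<sigma> a" using fibres that by blast
    then show ?thesis using delta_hom_le[OF \<tau>h that] unfolding \<rho>_def a'_def by simp
  qed
  have "delta_hom k' n \<rho>"
  proof (rule delta_homI)
    fix i assume "i \<le> k'"
    then obtain a where "a \<le> k" "\<tau> a = i" using delta_epi_surj[OF \<tau>] by blast
    then show "\<rho> i \<le> n" using \<rho> delta_hom_le[OF \<sigma>h] by auto
  next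
    fix i j assume ij: "i \<le> j" "j \<le> k'"
    obtain a b where ab: "a \<le> k" "\<tau> a = i" "b \<le> k" "\<tau> b = j"
      using delta_epi_surj[OF \<tau>] ij by (meson order.trans)
    show "\<rho> i \<le> \<rho> j"
    proof (rule ccontr)
      assume "\<not> \<rho> i \<le> \<rho> j"
      then have "\<not> a \<le> b" using \<rho> ab delta_hom_monoD[OF \<sigma>h, of a b] by auto
      then have "j \<le> i" using ab delta_hom_monoD[OF \<tau>h, of b a] by simp
      with ij \<open>\<not> \<rho> i \<le> \<rho> j\<close> show False by simp
    qed
  qed (simp add: \<rho>_def)
  moreover have "\<sigma> = delta_comp k \<rho> \<tau>" using \<rho> by (intro delta_comp_eqI[OF \<sigma>h]) simp
  ultimately show ?thesis using delta_epi_of_comp_epi[OF \<tau>h] \<sigma> by metis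
qed

lemma openin_Collect_finite_Ball:
  assumes "finite F" "\<And>p. p \<in> F \<Longrightarrow> openin T {y \<in> topspace T. P p y}"
  shows "openin T {y \<in> topspace T. \<forall>p\<in>F. P p y}"
proof -
  have "{y \<in> topspace T. \<forall>p\<in>F. P p y} = (\<Inter>p\<in>F. {y \<in> topspace T. P p y}) \<inter> topspace T"
    by auto
  then show ?thesis using openin_INT[OF assms] by simp
qed

locale simplicial =
  fixes X :: "nat \<Rightarrow> 'a topology" and act :: "nat \<Rightarrow> nat \<Rightarrow> (nat \<Rightarrow> nat) \<Rightarrow> 'a \<Rightarrow> 'a"
  assumes simplicial_space: "simplicial_space X act"
begin

lemma continuous_map_act: "delta_hom m n f \<Longrightarrow> continuous_map (X n) (X m) (act m n f)"
  using simplicial_space unfolding simplicial_space_def by blast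

lemma act_in_topspace: "delta_hom m n f \<Longrightarrow> y \<in> topspace (X n) \<Longrightarrow> act m n f y \<in> topspace (X m)"
  using continuous_map_act[THEN continuous_map_image_subset_topspace] by blast

lemma act_comp:
  "delta_hom m k f \<Longrightarrow> delta_hom k n g \<Longrightarrow> y \<in> topspace (X n) \<Longrightarrow>
   act m n (delta_comp m g f) y = act m k f (act k n g y)"
  using simplicial_space unfolding simplicial_space_def by blast

lemma act_id: "y \<in> topspace (X n) \<Longrightarrow> act n n (delta_id n) y = y"
  using simplicial_space unfolding simplicial_space_def by blast

lemma act_epi_U_ext:
  assumes z: "z \<in> U_ext X act N U j \<rho>" and e: "delta_epi m j e" and \<rho>: "delta_hom j n \<rho>"
  shows "act m j e z \<in> U_ext X act N U m (delta_comp m \<rho> e)"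
proof -
  have zt: "z \<in> topspace (X j)" using z unfolding U_ext_def by blast
  have "act N m \<tau> (act m j e z) \<in> U (delta_comp N (delta_comp m \<rho> e) \<tau>)"
    if \<tau>: "delta_epi N m \<tau>" for \<tau>
  proof -
    have "act N j (delta_comp N e \<tau>) z \<in> U (delta_comp N \<rho> (delta_comp N e \<tau>))"
      using z delta_epi_comp[OF \<tau> e] unfolding U_ext_def by blast
    then show ?thesis
      using act_comp[OF delta_epi_imp_hom[OF \<tau>] delta_epi_imp_hom[OF e] zt]
        delta_comp_assoc[OF delta_epi_imp_hom[OF \<tau>]] by simp
  qed
  then show ?thesis
    unfolding U_ext_def using act_in_topspace[OF delta_epi_imp_hom[OF e] zt] by blast
qed

text \<open>U(sigma) only tests monomorphisms; the epi-mono factorization extends the control to every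
  morphism into [k].\<close>

lemma act_U_big_in_U_ext:
  assumes y: "y \<in> U_big X act n N U k \<sigma>" and \<sigma>: "delta_hom k n \<sigma>" and g: "delta_hom m k g"
    and "m \<le> N" and \<sigma>g: "delta_epi m n (delta_comp m \<sigma> g)"
  shows "act m k g y \<in> U_ext X act N U m (delta_comp m \<sigma> g)"
proof -
  have yt: "y \<in> topspace (X k)" using y unfolding U_big_def by blast
  obtain j e d where e: "delta_epi m j e" and d: "delta_mono j k d" and g_eq: "g = delta_comp m d e"
    using delta_epi_mono_factorization[OF g] by blast
  have \<sigma>d: "delta_hom j n (delta_comp j \<sigma> d)"
    using delta_hom_comp[OF delta_mono_imp_hom[OF d] \<sigma>] .
  have \<sigma>g_eq: "delta_comp m \<sigma> g = delta_comp m (delta_comp j \<sigma> d) e"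
    using g_eq delta_comp_assoc[OF delta_epi_imp_hom[OF e]] by simp
  have "delta_epi j n (delta_comp j \<sigma> d)"
    using delta_epi_of_comp_epi[OF delta_epi_imp_hom[OF e] \<sigma>d] \<sigma>g \<sigma>g_eq by simp
  moreover have "j \<le> N" using delta_epi_le[OF e] \<open>m \<le> N\<close> by simp
  ultimately have "act j k d y \<in> U_ext X act N U j (delta_comp j \<sigma> d)"
    using y d unfolding U_big_def by blast
  then show ?thesis
    using act_epi_U_ext[OF _ e \<sigma>d] act_comp[OF delta_epi_imp_hom[OF e] delta_mono_imp_hom[OF d] yt]
      g_eq \<sigma>g_eq by simp
qed

lemma act_U_big:
  assumes y: "y \<in> U_big X act n N U k \<sigma>" and \<sigma>: "delta_hom k n \<sigma>" and g: "delta_hom m k g"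
  shows "act m k g y \<in> U_big X act n N U m (delta_comp m \<sigma> g)"
proof -
  have yt: "y \<in> topspace (X k)" using y unfolding U_big_def by blast
  have "act i m \<delta> (act m k g y) \<in> U_ext X act N U i (delta_comp i (delta_comp m \<sigma> g) \<delta>)"
    if "i \<le> N" "delta_mono i m \<delta>" "delta_epi i n (delta_comp i (delta_comp m \<sigma> g) \<delta>)" for i \<delta>
  proof -
    have \<delta>: "delta_hom i m \<delta>" using that(2) by (rule delta_mono_imp_hom)
    have eq: "delta_comp i (delta_comp m \<sigma> g) \<delta> = delta_comp i \<sigma> (delta_comp i g \<delta>)"
      using delta_comp_assoc[OF \<delta>] by simp
    show ?thesis
      using act_U_big_in_U_ext[OF y \<sigma> delta_hom_comp[OF \<delta> g] that(1)] that(3) eq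
        act_comp[OF \<delta> g yt] by simp
  qed
  then show ?thesis unfolding U_big_def using act_in_topspace[OF g yt] by blast
qed

end

locale admissible_family = simplicial X act
  for X :: "nat \<Rightarrow> 'a topology" and act :: "nat \<Rightarrow> nat \<Rightarrow> (nat \<Rightarrow> nat) \<Rightarrow> 'a \<Rightarrow> 'a" +
  fixes n N :: nat and x :: 'a and U :: "(nat \<Rightarrow> nat) \<Rightarrow> 'a set"
  assumes x_in_topspace: "x \<in> topspace (X n)"
    and n_le_N: "n \<le> N"
    and admissible: "admissible X act n x N U"
begin

lemma openin_U_ext:
  assumes \<rho>: "delta_epi k n \<rho>"
  shows "openin (X k) (U_ext X act N U k \<rho>)"
proof -
  have "U_ext X act N U k \<rho> =
      {y \<in> topspace (X k). \<forall>\<tau>\<in>{\<tau>. delta_epi N k \<tau>}. act N k \<tau> y \<in> U (delta_comp N \<rho> \<tau>)}"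
    unfolding U_ext_def by auto
  also have "openin (X k) \<dots>"
  proof (rule openin_Collect_finite_Ball)
    show "finite {\<tau>. delta_epi N k \<tau>}"
      using finite_subset[OF _ finite_delta_homs] delta_epi_imp_hom by (metis mem_Collect_eq subsetI)
    fix \<tau> assume "\<tau> \<in> {\<tau>. delta_epi N k \<tau>}"
    then have \<tau>: "delta_epi N k \<tau>" by simp
    have "openin (X N) (U (delta_comp N \<rho> \<tau>))"
      using admissible delta_epi_comp[OF \<tau> \<rho>] unfolding admissible_def by blast
    then show "openin (X k) {y \<in> topspace (X k). act N k \<tau> y \<in> U (delta_comp N \<rho> \<tau>)}"
      using openin_continuous_map_preimage continuous_map_act[OF delta_epi_imp_hom[OF \<tau>]] by blast
  qed
  finally show ?thesis .
qed

lemma openin_U_big: "openin (X k) (U_big X act n N U k \<sigma>)"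
proof -
  define F where "F = {(i, \<delta>). i \<le> N \<and> delta_mono i k \<delta> \<and> delta_epi i n (delta_comp i \<sigma> \<delta>)}"
  have "U_big X act n N U k \<sigma> = {y \<in> topspace (X k). \<forall>(i, \<delta>)\<in>F.
      act i k \<delta> y \<in> U_ext X act N U i (delta_comp i \<sigma> \<delta>)}"
    unfolding U_big_def F_def by auto
  also have "openin (X k) \<dots>"
  proof (rule openin_Collect_finite_Ball)
    have "F \<subseteq> Sigma {0..N} (\<lambda>i. {f. delta_hom i k f})"
      unfolding F_def using delta_mono_imp_hom by auto
    then show "finite F" by (rule finite_subset) (simp add: finite_delta_homs)
  next
    fix p assume "p \<in> F"
    then obtain i \<delta> where p: "p = (i, \<delta>)" "delta_mono i k \<delta>" "delta_epi i n (delta_comp i \<sigma> \<delta>)"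
      unfolding F_def by auto
    show "openin (X k) {y \<in> topspace (X k).
        case p of (i, \<delta>) \<Rightarrow> act i k \<delta> y \<in> U_ext X act N U i (delta_comp i \<sigma> \<delta>)}"
      using openin_continuous_map_preimage[OF continuous_map_act[OF delta_mono_imp_hom[OF p(2)]]
          openin_U_ext[OF p(3)]] p(1) by simp
  qed
  finally show ?thesis .
qed

lemma act_x_in_U_ext:
  assumes \<rho>: "delta_epi k n \<rho>"
  shows "act k n \<rho> x \<in> U_ext X act N U k \<rho>"
proof -
  have "act N k \<tau> (act k n \<rho> x) \<in> U (delta_comp N \<rho> \<tau>)" if \<tau>: "delta_epi N k \<tau>" for \<tau>
  proof -
    have "act N n (delta_comp N \<rho> \<tau>) x \<in> U (delta_comp N \<rho> \<tau>)"
      using admissible delta_epi_comp[OF \<tau> \<rho>] unfolding admissible_def by blast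
    then show ?thesis
      using act_comp[OF delta_epi_imp_hom[OF \<tau>] delta_epi_imp_hom[OF \<rho>] x_in_topspace] by simp
  qed
  then show ?thesis
    unfolding U_ext_def using act_in_topspace[OF delta_epi_imp_hom[OF \<rho>] x_in_topspace] by blast
qed

lemma act_x_in_U_big:
  assumes \<sigma>: "delta_hom k n \<sigma>"
  shows "act k n \<sigma> x \<in> U_big X act n N U k \<sigma>"
proof -
  have "act i k \<delta> (act k n \<sigma> x) \<in> U_ext X act N U i (delta_comp i \<sigma> \<delta>)"
    if "delta_mono i k \<delta>" "delta_epi i n (delta_comp i \<sigma> \<delta>)" for i \<delta>
    using act_x_in_U_ext[OF that(2)] act_comp[OF delta_mono_imp_hom[OF that(1)] \<sigma> x_in_topspace]
    by simp
  then show ?thesis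
    unfolding U_big_def using act_in_topspace[OF \<sigma> x_in_topspace] by blast
qed

lemma U_big_subset_U_ext:
  assumes "k \<le> N" and \<sigma>: "delta_epi k n \<sigma>"
  shows "U_big X act n N U k \<sigma> \<subseteq> U_ext X act N U k \<sigma>"
proof
  fix y assume y: "y \<in> U_big X act n N U k \<sigma>"
  have "delta_comp k \<sigma> (delta_id k) = \<sigma>" using delta_comp_id_right[OF delta_epi_imp_hom[OF \<sigma>]] .
  then have "act k k (delta_id k) y \<in> U_ext X act N U k \<sigma>"
    using y \<open>k \<le> N\<close> delta_mono_id \<sigma> unfolding U_big_def by (metis (no_types, lifting) mem_Collect_eq)
  moreover have "y \<in> topspace (X k)" using y unfolding U_big_def by blast
  ultimately show "y \<in> U_ext X act N U k \<sigma>" using act_id by simp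
qed

lemma degenerate_notin_U_ext_id:
  assumes e: "delta_epi n j e" and v: "v \<in> topspace (X j)"
    and in_U: "act n j e v \<in> U_ext X act N U n (delta_id n)"
  shows "j = n"
proof -
  obtain \<tau> where \<tau>: "delta_epi N n \<tau>" using delta_epi_exists[OF n_le_N] by blast
  have "act N n \<tau> (act n j e v) \<in> U \<tau>"
    using in_U \<tau> delta_comp_id_left[OF delta_epi_imp_hom[OF \<tau>]] unfolding U_ext_def by auto
  moreover have "act N n \<tau> (act n j e v) = act N j (delta_comp N e \<tau>) v"
    using act_comp[OF delta_epi_imp_hom[OF \<tau>] delta_epi_imp_hom[OF e] v] by simp
  ultimately have "U \<tau> \<inter> act N j (delta_comp N e \<tau>) ` topspace (X j) \<noteq> {}" using v by blast
  then obtain \<rho> where "delta_epi j n \<rho>"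
    using admissible \<tau> delta_epi_comp[OF \<tau> e] unfolding admissible_def by blast
  then show ?thesis using delta_epi_le[OF e] delta_epi_le by fastforce
qed

lemma U_big_fibres:
  assumes \<sigma>: "delta_epi k n \<sigma>" and \<tau>: "delta_hom k k' \<tau>" and z: "z \<in> topspace (X k')"
    and in_U: "act k k' \<tau> z \<in> U_big X act n N U k \<sigma>"
    and ab: "a \<le> k" "b \<le> k" "\<tau> a = \<tau> b"
  shows "\<sigma> a = \<sigma> b"
proof (rule ccontr)
  assume ne: "\<sigma> a \<noteq> \<sigma> b"
  obtain \<delta> where \<delta>: "delta_mono n k \<delta>" "delta_comp n \<sigma> \<delta> = delta_id n"
      "\<delta> (\<sigma> a) = a" "\<delta> (\<sigma> b) = b"
    using delta_epi_section_through[OF \<sigma> ab(1,2) ne] by blast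
  have \<delta>h: "delta_hom n k \<delta>" using \<delta>(1) by (rule delta_mono_imp_hom)
  define g where "g = delta_comp n \<tau> \<delta>"
  obtain j e d where e: "delta_epi n j e" and d: "delta_mono j k' d" and g_eq: "g = delta_comp n d e"
    using delta_epi_mono_factorization[OF delta_hom_comp[OF \<delta>h \<tau>]] unfolding g_def by blast
  have "act n k \<delta> (act k k' \<tau> z) \<in> U_ext X act N U n (delta_id n)"
    using in_U n_le_N \<delta>(1,2) delta_epi_id unfolding U_big_def by (metis (no_types, lifting) mem_Collect_eq)
  moreover have "act n k \<delta> (act k k' \<tau> z) = act n j e (act j k' d z)"
    using act_comp[OF \<delta>h \<tau> z] act_comp[OF delta_epi_imp_hom[OF e] delta_mono_imp_hom[OF d] z] g_eq
    unfolding g_def by simp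
  ultimately have "j = n"
    using degenerate_notin_U_ext_id[OF e act_in_topspace[OF delta_mono_imp_hom[OF d] z]] by simp
  then have inj_e: "inj_on e {0..n}" using delta_epi_self_inj e by simp
  have \<sigma>ab: "\<sigma> a \<le> n" "\<sigma> b \<le> n" using delta_hom_le[OF delta_epi_imp_hom[OF \<sigma>]] ab by auto
  then have "d (e (\<sigma> a)) = d (e (\<sigma> b))"
    using g_eq \<delta>(3,4) ab(3) delta_comp_apply unfolding g_def by metis
  then have "e (\<sigma> a) = e (\<sigma> b)"
    using d \<sigma>ab delta_hom_le[OF delta_epi_imp_hom[OF e]] unfolding delta_mono_def
    by (meson atLeastAtMost_iff inj_onD le0)
  then show False using inj_e \<sigma>ab ne by (meson atLeastAtMost_iff inj_onD le0)
qed

lemma image_act_meets_U_big_iff: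
  assumes \<sigma>: "delta_epi k n \<sigma>" and \<tau>: "delta_epi k k' \<tau>"
  shows "act k k' \<tau> ` topspace (X k') \<inter> U_big X act n N U k \<sigma> \<noteq> {} \<longleftrightarrow>
    (\<exists>\<rho>. delta_epi k' n \<rho> \<and> \<sigma> = delta_comp k \<rho> \<tau>)"
proof
  assume "act k k' \<tau> ` topspace (X k') \<inter> U_big X act n N U k \<sigma> \<noteq> {}"
  then obtain z where "z \<in> topspace (X k')" "act k k' \<tau> z \<in> U_big X act n N U k \<sigma>" by blast
  then show "\<exists>\<rho>. delta_epi k' n \<rho> \<and> \<sigma> = delta_comp k \<rho> \<tau>"
    using delta_epi_factor_through[OF \<sigma> \<tau>] U_big_fibres[OF \<sigma> delta_epi_imp_hom[OF \<tau>]] by blast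
next
  assume "\<exists>\<rho>. delta_epi k' n \<rho> \<and> \<sigma> = delta_comp k \<rho> \<tau>"
  then obtain \<rho> where \<rho>: "delta_epi k' n \<rho>" and \<sigma>_eq: "\<sigma> = delta_comp k \<rho> \<tau>" by blast
  have "act k k' \<tau> (act k' n \<rho> x) = act k n \<sigma> x"
    using act_comp[OF delta_epi_imp_hom[OF \<tau>] delta_epi_imp_hom[OF \<rho>] x_in_topspace] \<sigma>_eq by simp
  moreover have "act k' n \<rho> x \<in> topspace (X k')"
    using act_in_topspace[OF delta_epi_imp_hom[OF \<rho>] x_in_topspace] .
  ultimately show "act k k' \<tau> ` topspace (X k') \<inter> U_big X act n N U k \<sigma> \<noteq> {}"
    using act_x_in_U_big[OF delta_epi_imp_hom[OF \<sigma>]] by (metis IntI empty_iff image_eqI)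
qed

end

theorem proposition2p3:
  fixes X :: "nat \<Rightarrow> 'a topology"
    and act :: "nat \<Rightarrow> nat \<Rightarrow> (nat \<Rightarrow> nat) \<Rightarrow> 'a \<Rightarrow> 'a"
    and n N k :: nat and x :: 'a and U :: "(nat \<Rightarrow> nat) \<Rightarrow> 'a set"
    and \<sigma> :: "nat \<Rightarrow> nat"
  assumes "simplicial_space X act"
    and "x \<in> topspace (X n)"
    and "\<not> degenerate X act n x"
    and "n \<le> N"
    and "admissible X act n x N U"
    and "delta_epi k n \<sigma>"
  shows "(openin (X k) (U_big X act n N U k \<sigma>) \<and> act k n \<sigma> x \<in> U_big X act n N U k \<sigma>) \<and>
         (k \<le> N \<longrightarrow> U_big X act n N U k \<sigma> \<subseteq> U_ext X act N U k \<sigma>) \<and>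
         (\<forall>i \<delta>. delta_mono i k \<delta> \<longrightarrow> delta_epi i n (delta_comp i \<sigma> \<delta>) \<longrightarrow>
            act i k \<delta> ` U_big X act n N U k \<sigma> \<subseteq> U_big X act n N U i (delta_comp i \<sigma> \<delta>)) \<and>
         (\<forall>k' \<tau>. delta_epi k' k \<tau> \<longrightarrow>
            act k' k \<tau> ` U_big X act n N U k \<sigma> \<subseteq> U_big X act n N U k' (delta_comp k' \<sigma> \<tau>)) \<and>
         (\<forall>k' \<tau>. delta_epi k k' \<tau> \<longrightarrow>
            (act k k' \<tau> ` topspace (X k') \<inter> U_big X act n N U k \<sigma> \<noteq> {} \<longleftrightarrow>
             (\<exists>\<rho>. delta_epi k' n \<rho> \<and> \<sigma> = delta_comp k \<rho> \<tau>)))"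
proof -
  interpret admissible_family X act n N x U
    using assms by unfold_locales
  have \<sigma>: "delta_hom k n \<sigma>" using assms(6) by (rule delta_epi_imp_hom)
  have pullback: "act m k g ` U_big X act n N U k \<sigma> \<subseteq> U_big X act n N U m (delta_comp m \<sigma> g)"
    if "delta_hom m k g" for m g
    using act_U_big[OF _ \<sigma> that] by blast
  show ?thesis
    using openin_U_big act_x_in_U_big[OF \<sigma>] U_big_subset_U_ext[OF _ assms(6)]
      pullback delta_mono_imp_hom delta_epi_imp_hom image_act_meets_U_big_iff[OF assms(6)]
    by blast
qed

end
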